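(* For all $W\in\mathcal{C}$ and all $\bar\varphi\in\mathbb{R}$ we have $\mathcal{L}\big(W(\cdot+\bar\varphi)\big)=\mathcal{L}(W)$.
   Context: Let $\Phi:\mathbb{R}\to\mathbb{R}$ be twice continuously differentiable on $[-1,1]$ with: $\Phi'(-1)=-1$, $\Phi'(1)=1$; $\Phi''\ge0$ on $[-1,1]$; $\Phi(-1)=\Phi(1)$; $\Phi''(-1)<1$, $\Phi''(1)<1$; and $g_\Phi(w):=\int_{-1}^w(v-\Phi'(v))\,dv>0$ for all $w\in(-1,1)$. $(\mathcal{A}U)(\varphi)=\int_{\varphi-1/2}^{\varphi+1/2}U(s)\,ds$; $W_{\rm sh}(\varphi)=\mathrm{sgn}(\varphi)$; $\mathcal{H}=\{W\text{ measurable}: W_{\rm sh}-W\in L^2(\mathbb{R})\}$; $\mathcal{L}(W)=\int_{\mathbb{R}}(\tfrac12W^2-\Phi(\mathcal{A}W))-(\tfrac12W_{\rm sh}^2-\Phi(\mathcal{A}W_{\rm sh}))\,d\varphi$. $\mathcal{C}$ is the set of $W\in\mathcal{H}$ that are a.e. equal to a nondecreasing function with $W(\varphi)\to\pm1$ as $\varphi\to\pm\infty$. *)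

theory Defs
  imports "HOL-Analysis.Analysis"
begin

definition avgop :: "(real \<Rightarrow> real) \<Rightarrow> real \<Rightarrow> real" where
  "avgop U \<phi> = (LINT s:{\<phi> - 1/2 .. \<phi> + 1/2}|lebesgue. U s)"

definition Wsh :: "real \<Rightarrow> real" where
  "Wsh \<phi> = sgn \<phi>"

definition Hspace :: "(real \<Rightarrow> real) set" where
  "Hspace = {W. W \<in> borel_measurable lebesgue \<and>
                 integrable lebesgue (\<lambda>\<phi>. (Wsh \<phi> - W \<phi>)\<^sup>2)}"

definition Lfun :: "(real \<Rightarrow> real) \<Rightarrow> (real \<Rightarrow> real) \<Rightarrow> real" where
  "Lfun \<Phi> W = (LINT \<phi>|lebesgue.
      ((1/2) * (W \<phi>)\<^sup>2 - \<Phi> (avgop W \<phi>)) - ((1/2) * (Wsh \<phi>)\<^sup>2 - \<Phi> (avgop Wsh \<phi>)))"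

definition Ccone :: "(real \<Rightarrow> real) set" where
  "Ccone = {W \<in> Hspace. \<exists>V. mono V \<and> (AE \<phi> in lebesgue. W \<phi> = V \<phi>) \<and>
                           (V \<longlongrightarrow> -1) at_bot \<and> (V \<longlongrightarrow> 1) at_top}"

end

theory Submission
  imports Defs
begin

text \<open>
  Translating W by phibar translates the integrand 1/2 W^2 - Phi(A W) by phibar, since A commutes
  with translations. The reference term 1/2 Wsh^2 - Phi(A Wsh) is not translated, but it differs
  from the constant 1/2 - Phi(1) only on [-1/2, 1/2], because A Wsh = +-1 outside that interval
  and Phi(-1) = Phi(1). The error made by translating it is therefore the difference of an
  integrable function and its translate, which has integral zero, and translation invariance of
  Lebesgue measure gives the claim, even when the integrand is not integrable (both sides are 0).
\<close>

lemma measurable_lebesgue_add_const: "(\<lambda>x::real. x + t) \<in> lebesgue \<rightarrow>\<^sub>M lebesgue"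
  using lebesgue_affine_measurable[where c="\<lambda>_::real. 1" and t=t] by (simp add: add.commute)

lemma distr_lebesgue_add_const: "distr lebesgue lebesgue (\<lambda>x::real. x + t) = lebesgue"
  using lebesgue_real_affine[of 1 t] by (simp add: add.commute density_1)

lemma borel_measurable_lebesgue_shift_iff:
  "(\<lambda>x. g (x + t)) \<in> borel_measurable lebesgue \<longleftrightarrow> (g::real \<Rightarrow> real) \<in> borel_measurable lebesgue"
proof
  assume "(\<lambda>x. g (x + t)) \<in> borel_measurable lebesgue"
  then have "(\<lambda>x. g (x + (-t) + t)) \<in> borel_measurable lebesgue"
    using measurable_compose[OF measurable_lebesgue_add_const[of "-t"]] by blast
  then show "g \<in> borel_measurable lebesgue" by simp
qed (use measurable_compose[OF measurable_lebesgue_add_const] in blast)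

lemma integrable_lebesgue_shift_iff:
  "integrable lebesgue (\<lambda>x. g (x + t)) \<longleftrightarrow> integrable lebesgue (g::real \<Rightarrow> real)"
proof (cases "g \<in> borel_measurable lebesgue")
  case True
  show ?thesis
    using integrable_distr_eq[OF measurable_lebesgue_add_const True, of t]
    by (simp add: distr_lebesgue_add_const)
next
  case False
  then show ?thesis
    using borel_measurable_lebesgue_shift_iff[of g t] borel_measurable_integrable by blast
qed

lemma integral_lebesgue_shift:
  "(LINT x|lebesgue. g (x + t)) = (LINT x|lebesgue. (g::real \<Rightarrow> real) x)"
proof (cases "integrable lebesgue g")
  case True
  show ?thesis
    using integral_distr[OF measurable_lebesgue_add_const borel_measurable_integrable[OF True], of t]
    by (simp add: distr_lebesgue_add_const)
next
  case False
  then show ?thesis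
    using integrable_lebesgue_shift_iff[of g t] not_integrable_integral_eq by metis
qed

text \<open>If \<open>f\<close> is not integrable, neither integrand is, and both sides are 0.\<close>
lemma integral_lebesgue_shift_add_difference:
  fixes f g :: "real \<Rightarrow> real"
  assumes g: "integrable lebesgue (\<lambda>p. g p - a)"
  shows "(LINT p|lebesgue. f (p + c) + (g (p + c) - g p)) = (LINT p|lebesgue. f p)"
proof -
  define k where "k = (\<lambda>p. g p - a)"
  have k: "integrable lebesgue k" "integrable lebesgue (\<lambda>p. k (p + c))"
    using g integrable_lebesgue_shift_iff[of k c] by (simp_all add: k_def)
  have diff: "g (p + c) - g p = k (p + c) - k p" for p
    by (simp add: k_def)
  show ?thesis
  proof (cases "integrable lebesgue f")
    case True
    then have "integrable lebesgue (\<lambda>p. f (p + c))"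
      using integrable_lebesgue_shift_iff by blast
    then show ?thesis
      using k integral_lebesgue_shift[of f c] integral_lebesgue_shift[of k c]
      by (simp add: diff)
  next
    case False
    have "\<not> integrable lebesgue (\<lambda>p. f (p + c) + (g (p + c) - g p))"
    proof
      assume "integrable lebesgue (\<lambda>p. f (p + c) + (g (p + c) - g p))"
      then have "integrable lebesgue (\<lambda>p. f (p + c) + (g (p + c) - g p) - (k (p + c) - k p))"
        using k by simp
      then have "integrable lebesgue (\<lambda>p. f (p + c))"
        by (simp add: diff)
      then show False
        using False integrable_lebesgue_shift_iff by blast
    qed
    then show ?thesis
      using False not_integrable_integral_eq by metis
  qed
qed

lemma avgop_shift: "avgop (\<lambda>x. W (x + t)) p = avgop W (p + t)"
proof -
  have "avgop (\<lambda>x. W (x + t)) p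
      = (LINT s|lebesgue. (\<lambda>s. indicator {p + t - 1/2 .. p + t + 1/2} s *\<^sub>R W s) (s + t))"
    unfolding avgop_def set_lebesgue_integral_def
    by (intro Bochner_Integration.integral_cong refl) (auto simp: indicator_def)
  also have "\<dots> = avgop W (p + t)"
    unfolding avgop_def set_lebesgue_integral_def by (rule integral_lebesgue_shift)
  finally show ?thesis .
qed

lemma avgop_Wsh: "avgop Wsh p = max (-1) (min 1 (2 * p))"
proof -
  let ?a = "p - 1/2" and ?b = "p + 1/2"
  have "avgop Wsh p = (\<integral>s. indicator {?a..?b} s * sgn s \<partial>lborel)"
    unfolding avgop_def set_lebesgue_integral_def Wsh_def
    by (simp add: integral_completion)
  also have "\<dots> = max (-1) (min 1 (2 * p))"
  proof -
    consider "p < -1/2" | "p > 1/2" | "-1/2 \<le> p" "p \<le> 1/2" by linarith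
    then show ?thesis
    proof cases
      case 1
      then have "(\<lambda>s. indicator {?a..?b} s * sgn s) = (\<lambda>s. - indicator {?a..?b} s :: real)"
        by (auto simp: fun_eq_iff indicator_def)
      with 1 show ?thesis by simp
    next
      case 2
      then have "(\<lambda>s. indicator {?a..?b} s * sgn s) = (indicator {?a..?b} :: real \<Rightarrow> real)"
        by (auto simp: fun_eq_iff indicator_def)
      with 2 show ?thesis by simp
    next
      case 3
      then have "(\<lambda>s. indicator {?a..?b} s * sgn s)
          = (\<lambda>s. indicator {0..?b} s - indicator {?a..0} s :: real)"
        by (auto simp: fun_eq_iff indicator_def sgn_if)
      with 3 show ?thesis by simp
    qed
  qed
  finally show ?thesis .
qed

lemma integrable_Lfun_reference_density:
  fixes \<Phi> :: "real \<Rightarrow> real"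
  assumes cont: "continuous_on {-1..1} \<Phi>" and sym: "\<Phi> (-1) = \<Phi> 1"
  shows "integrable lebesgue (\<lambda>p. ((1/2) * (Wsh p)\<^sup>2 - \<Phi> (avgop Wsh p)) - (1/2 - \<Phi> 1))"
proof -
  define k where "k p = ((1/2) * (Wsh p)\<^sup>2 - \<Phi> (avgop Wsh p)) - (1/2 - \<Phi> 1)" for p
  define clamp :: "real \<Rightarrow> real" where "clamp x = max (-1) (min 1 x)" for x
  have clamp: "clamp x \<in> {-1..1}" for x
    by (simp add: clamp_def)
  obtain B where B: "\<And>x. x \<in> {-1..1} \<Longrightarrow> \<bar>\<Phi> x\<bar> \<le> B"
    using compact_imp_bounded[OF compact_continuous_image[OF cont compact_Icc]]
    by (metis bounded_real image_eqI)
  have "continuous_on UNIV (\<lambda>p. \<Phi> (clamp (2 * p)))"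
    by (rule continuous_on_compose2[OF cont]) (auto simp: clamp_def intro!: continuous_intros)
  then have "(\<lambda>p. \<Phi> (clamp (2 * p))) \<in> borel_measurable lborel"
    by (simp add: borel_measurable_continuous_onI)
  moreover have "k = (\<lambda>p. ((1/2) * (sgn p)\<^sup>2 - \<Phi> (clamp (2 * p))) - (1/2 - \<Phi> 1))"
    by (simp add: fun_eq_iff k_def Wsh_def avgop_Wsh clamp_def)
  ultimately have "k \<in> borel_measurable lborel"
    by simp
  then have meas: "k \<in> borel_measurable lebesgue"
    by (rule measurable_completion)
  have bound: "\<bar>k p\<bar> \<le> 1 + 2 * B" for p
  proof -
    have "\<bar>\<Phi> (avgop Wsh p)\<bar> \<le> B" "\<bar>\<Phi> 1\<bar> \<le> B"
      using B clamp by (auto simp: avgop_Wsh clamp_def)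
    moreover have "0 \<le> (Wsh p)\<^sup>2" "(Wsh p)\<^sup>2 \<le> 1"
      by (simp_all add: Wsh_def sgn_if)
    ultimately show ?thesis
      unfolding k_def by arith
  qed
  have support: "k p = 0" if "p \<notin> {-1/2..1/2}" for p
    using that sym by (auto simp: k_def avgop_Wsh Wsh_def)
  have "integrable lebesgue k"
    by (rule integrableI_bounded_set[where A="{-1/2..1/2}" and B="1 + 2 * B"])
      (use meas bound support in auto)
  then show ?thesis
    unfolding k_def[abs_def] .
qed

theorem corollary3p10:
  fixes \<Phi> dPhi ddPhi :: "real \<Rightarrow> real"
  assumes d1: "\<And>x. x \<in> {-1..1} \<Longrightarrow> (\<Phi> has_real_derivative dPhi x) (at x within {-1..1})"
    and d2: "\<And>x. x \<in> {-1..1} \<Longrightarrow> (dPhi has_real_derivative ddPhi x) (at x within {-1..1})"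
    and d2c: "continuous_on {-1..1} ddPhi"
    and dm1: "dPhi (-1) = -1" and dp1: "dPhi 1 = 1"
    and convex: "\<And>x. x \<in> {-1..1} \<Longrightarrow> ddPhi x \<ge> 0"
    and sym: "\<Phi> (-1) = \<Phi> 1"
    and ddm1: "ddPhi (-1) < 1" and ddp1: "ddPhi 1 < 1"
    and gpos: "\<And>w. w \<in> {-1<..<1} \<Longrightarrow> integral {-1..w} (\<lambda>v. v - dPhi v) > 0"
    and W: "W \<in> Ccone"
  shows "Lfun \<Phi> (\<lambda>\<phi>. W (\<phi> + \<phi>bar)) = Lfun \<Phi> W"
proof -
  have cont: "continuous_on {-1..1} \<Phi>"
    using d1 by (meson DERIV_continuous continuous_on_eq_continuous_within)
  define F where "F p = (1/2) * (W p)\<^sup>2 - \<Phi> (avgop W p)" for p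
  define h where "h p = (1/2) * (Wsh p)\<^sup>2 - \<Phi> (avgop Wsh p)" for p
  have "Lfun \<Phi> (\<lambda>\<phi>. W (\<phi> + \<phi>bar))
      = (LINT p|lebesgue. (F (p + \<phi>bar) - h (p + \<phi>bar)) + (h (p + \<phi>bar) - h p))"
    unfolding Lfun_def F_def h_def avgop_shift
    by (intro Bochner_Integration.integral_cong) (simp_all add: algebra_simps)
  also have "\<dots> = (LINT p|lebesgue. F p - h p)"
    by (rule integral_lebesgue_shift_add_difference)
      (unfold h_def, rule integrable_Lfun_reference_density[OF cont sym])
  also have "\<dots> = Lfun \<Phi> W"
    unfolding Lfun_def F_def h_def ..
  finally show ?thesis .
qed

end
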